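(* For the conditions (i)–(v) of the context, (i) $\Longleftrightarrow$ (ii) $\Longrightarrow$ (iii) $\Longrightarrow$ (iv) $\Longrightarrow$ (v).
   Context: $X$ is a finite-dimensional real Hilbert space with norm $\|\cdot\|$, $T:X\rightrightarrows X$ is a maximal monotone operator, $\Omega:=T^{-1}(0)$, $\mathbb{B}$ is the closed unit ball, $\mathbb{B}(z;r)$ the closed ball of radius $r$ about $z$, $\operatorname{dist}(0,\emptyset)=+\infty$. Conditions: (i) there exist $r>0,\kappa_r>0$ with $\operatorname{dist}(z,\Omega)\le\kappa_r\|w\|$ for all $w\in\mathbb{B}(0;r)$ and $z\in T^{-1}(w)$; (ii) there exist $r>0,\kappa_r>0$ with $T^{-1}(w)\subset T^{-1}(0)+\kappa_r\|w\|\mathbb{B}$ for all $w\in\mathbb{B}(0;r)$; (iii) for every $r>0$ there exists $\kappa_r>0$ with $\operatorname{dist}(z,\Omega)\le\kappa_r\operatorname{dist}(0,T(z))$ for all $z$ with $\operatorname{dist}(z,\Omega)\le r$; (iv) for every $r>0$ there exists $\kappa_r>0$ with $\operatorname{dist}(z,\Omega)\le\kappa_r\operatorname{dist}(0,T(z))$ for all $z$ with $\|z\|\le r$; (v) there exist $\bar z\in\Omega$, $r>0$, $\kappa_r>0$ with $\operatorname{dist}(z,\Omega)\le\kappa_r\operatorname{dist}(0,T(z))$ for all $z\in\mathbb{B}(\bar z;r)$. *)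

theory Defs
  imports "HOL-Analysis.Analysis" "HOL-Library.Extended_Real"
begin

definition monotone_op :: "('a::real_inner \<Rightarrow> 'a set) \<Rightarrow> bool" where
  "monotone_op T \<longleftrightarrow>
     (\<forall>x y u v. u \<in> T x \<longrightarrow> v \<in> T y \<longrightarrow> 0 \<le> inner (x - y) (u - v))"

definition maximal_monotone :: "('a::real_inner \<Rightarrow> 'a set) \<Rightarrow> bool" where
  "maximal_monotone T \<longleftrightarrow>
     monotone_op T \<and> (\<forall>S. monotone_op S \<and> (\<forall>x. T x \<subseteq> S x) \<longrightarrow> S = T)"

definition dist_set :: "'a::metric_space \<Rightarrow> 'a set \<Rightarrow> ereal" where
  "dist_set x S = (if S = {} then \<infinity> else ereal (infdist x S))"

definition inv_op :: "('a \<Rightarrow> 'a set) \<Rightarrow> 'a \<Rightarrow> 'a set" where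
  "inv_op T w = {z. w \<in> T z}"

end

theory Submission
  imports Defs
begin

text \<open>
  Conditions (i) and (ii) are two readings of dist(z, \<Omega>) \<le> \<kappa> \<parallel>w\<parallel> for w \<in> T(z),
  where \<kappa> doubles in passing from (i) to (ii) because the infimum defining dist(z, \<Omega>) need
  not be attained. A bound for \<parallel>w\<parallel> \<le> r0 extends to all w on a sublevel set
  dist(z, \<Omega>) \<le> r, since for \<parallel>w\<parallel> > r0 trivially dist(z, \<Omega>) \<le> r \<le> (r / r0) \<parallel>w\<parallel>.
  Every ball about 0 lies in such a sublevel set, and every ball about a point of \<Omega> lies in a
  ball about 0.
\<close>

lemma dist_set_nonempty: "S \<noteq> {} \<Longrightarrow> dist_set x S = ereal (infdist x S)"
  by (simp add: dist_set_def)

lemma dist_set_le_mult_dist_set_zeroI: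
  fixes A S :: "'a::real_normed_vector set"
  assumes "S \<noteq> {}" and "\<kappa> > 0" and bound: "\<And>w. w \<in> A \<Longrightarrow> infdist z S \<le> \<kappa> * norm w"
  shows "dist_set z S \<le> ereal \<kappa> * dist_set 0 A"
proof (cases "A = {}")
  case True
  then show ?thesis using assms by (simp add: dist_set_def)
next
  case False
  have "infdist z S / \<kappa> \<le> (INF w\<in>A. dist 0 w)"
  proof (rule cINF_greatest[OF False])
    fix w assume "w \<in> A"
    then show "infdist z S / \<kappa> \<le> dist 0 w"
      using bound \<open>\<kappa> > 0\<close> by (simp add: pos_divide_le_eq mult.commute)
  qed
  then have "infdist z S \<le> \<kappa> * infdist 0 A"
    using False \<open>\<kappa> > 0\<close> by (simp add: infdist_notempty pos_divide_le_eq mult.commute)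
  then show ?thesis using False \<open>S \<noteq> {}\<close> by (simp add: dist_set_def)
qed

lemma infdist_le_of_mem_plus_cball:
  fixes S :: "'a::real_normed_vector set"
  assumes "z \<in> {x + y | x y. x \<in> S \<and> y \<in> cball 0 \<rho>}"
  shows "infdist z S \<le> \<rho>"
proof -
  obtain x y where "z = x + y" "x \<in> S" "norm y \<le> \<rho>"
    using assms by auto
  then show ?thesis by (intro infdist_le2[of x]) (auto simp: dist_norm)
qed

lemma mem_plus_cball_of_infdist_less:
  fixes S :: "'a::real_normed_vector set"
  assumes "S \<noteq> {}" and "infdist z S < \<rho>"
  shows "z \<in> {x + y | x y. x \<in> S \<and> y \<in> cball 0 \<rho>}"
proof -
  obtain x where "x \<in> S" "dist z x < \<rho>"
    using assms cInf_lessD[of "dist z ` S"] by (auto simp: infdist_notempty)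
  then have "z = x + (z - x)" "x \<in> S" "z - x \<in> cball 0 \<rho>"
    by (auto simp: dist_norm norm_minus_commute)
  then show ?thesis by blast
qed

lemma cball_zero_subset_sublevel:
  fixes S :: "'a::real_normed_vector set"
  assumes "x \<in> S"
  shows "cball 0 r \<subseteq> {z. dist_set z S \<le> ereal (r + norm x)}"
proof
  fix z :: 'a assume "z \<in> cball 0 r"
  then have "infdist z S \<le> r + norm x"
    using infdist_le[OF assms, of z] norm_triangle_ineq4[of z x] by (simp add: dist_norm)
  then show "z \<in> {z. dist_set z S \<le> ereal (r + norm x)}" using assms by (auto simp: dist_set_def)
qed

lemma cball_subset_cball_zero:
  fixes x :: "'a::real_normed_vector"
  shows "cball x r \<subseteq> cball 0 (norm x + r)"
proof
  fix z assume "z \<in> cball x r"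
  then have "norm (z - x) \<le> r" by (simp add: dist_norm norm_minus_commute)
  then show "z \<in> cball 0 (norm x + r)" using norm_triangle_sub[of z x] by simp
qed

lemma inv_op_subset_plus_cball:
  fixes T :: "'a::real_normed_vector \<Rightarrow> 'a set"
  assumes "inv_op T 0 \<noteq> {}" and "\<kappa> > 0"
    and bound: "\<And>z. z \<in> inv_op T w \<Longrightarrow> infdist z (inv_op T 0) \<le> \<kappa> * norm w"
  shows "inv_op T w \<subseteq> {x + y | x y. x \<in> inv_op T 0 \<and> y \<in> cball 0 (2 * \<kappa> * norm w)}"
proof
  fix z assume z: "z \<in> inv_op T w"
  show "z \<in> {x + y | x y. x \<in> inv_op T 0 \<and> y \<in> cball 0 (2 * \<kappa> * norm w)}"
  proof (cases "w = 0")
    case True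
    with z have "z = z + 0 \<and> z \<in> inv_op T 0 \<and> 0 \<in> cball 0 (2 * \<kappa> * norm w)" by simp
    then show ?thesis by blast
  next
    case False
    then have "\<kappa> * norm w < 2 * \<kappa> * norm w" using \<open>\<kappa> > 0\<close> by simp
    then have "infdist z (inv_op T 0) < 2 * \<kappa> * norm w" using bound[OF z] by linarith
    then show ?thesis using mem_plus_cball_of_infdist_less \<open>inv_op T 0 \<noteq> {}\<close> by blast
  qed
qed

lemma infdist_le_on_sublevel_set:
  fixes T :: "'a::real_normed_vector \<Rightarrow> 'a set"
  assumes "r\<^sub>0 > 0"
    and local_bound: "\<And>w z. norm w \<le> r\<^sub>0 \<Longrightarrow> w \<in> T z \<Longrightarrow> infdist z S \<le> \<kappa>\<^sub>0 * norm w"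
    and "infdist z S \<le> r" and "w \<in> T z"
  shows "infdist z S \<le> max \<kappa>\<^sub>0 (r / r\<^sub>0) * norm w"
proof (cases "norm w \<le> r\<^sub>0")
  case True
  then have "infdist z S \<le> \<kappa>\<^sub>0 * norm w" using local_bound \<open>w \<in> T z\<close> by blast
  also have "\<dots> \<le> max \<kappa>\<^sub>0 (r / r\<^sub>0) * norm w" by (simp add: mult_right_mono)
  finally show ?thesis .
next
  case False
  have "r \<ge> 0" using infdist_nonneg \<open>infdist z S \<le> r\<close> by (rule order_trans)
  have "infdist z S \<le> (r / r\<^sub>0) * r\<^sub>0" using \<open>r\<^sub>0 > 0\<close> \<open>infdist z S \<le> r\<close> by simp
  also have "\<dots> \<le> (r / r\<^sub>0) * norm w"
    using False \<open>r \<ge> 0\<close> \<open>r\<^sub>0 > 0\<close> by (intro mult_left_mono) auto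
  also have "\<dots> \<le> max \<kappa>\<^sub>0 (r / r\<^sub>0) * norm w" by (intro mult_right_mono) auto
  finally show ?thesis .
qed

definition upper_lipschitz_dist :: "('a::real_normed_vector \<Rightarrow> 'a set) \<Rightarrow> bool" where
  "upper_lipschitz_dist T \<longleftrightarrow> (\<exists>r>0. \<exists>\<kappa>>0. \<forall>w \<in> cball 0 r. \<forall>z \<in> inv_op T w.
     dist_set z (inv_op T 0) \<le> ereal (\<kappa> * norm w))"

definition upper_lipschitz_incl :: "('a::real_normed_vector \<Rightarrow> 'a set) \<Rightarrow> bool" where
  "upper_lipschitz_incl T \<longleftrightarrow> (\<exists>r>0. \<exists>\<kappa>>0. \<forall>w \<in> cball 0 r.
     inv_op T w \<subseteq> {x + y | x y. x \<in> inv_op T 0 \<and> y \<in> cball 0 (\<kappa> * norm w)})"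

definition error_bound_on :: "('a::real_normed_vector \<Rightarrow> 'a set) \<Rightarrow> 'a set \<Rightarrow> real \<Rightarrow> bool" where
  "error_bound_on T S \<kappa> \<longleftrightarrow> (\<forall>z \<in> S. dist_set z (inv_op T 0) \<le> ereal \<kappa> * dist_set 0 (T z))"

definition error_bound_on_sublevels :: "('a::real_normed_vector \<Rightarrow> 'a set) \<Rightarrow> bool" where
  "error_bound_on_sublevels T \<longleftrightarrow>
     (\<forall>r>0. \<exists>\<kappa>>0. error_bound_on T {z. dist_set z (inv_op T 0) \<le> ereal r} \<kappa>)"

definition error_bound_on_bounded_sets :: "('a::real_normed_vector \<Rightarrow> 'a set) \<Rightarrow> bool" where
  "error_bound_on_bounded_sets T \<longleftrightarrow> (\<forall>r>0. \<exists>\<kappa>>0. error_bound_on T (cball 0 r) \<kappa>)"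

definition local_error_bound :: "('a::real_normed_vector \<Rightarrow> 'a set) \<Rightarrow> bool" where
  "local_error_bound T \<longleftrightarrow> (\<exists>zb \<in> inv_op T 0. \<exists>r>0. \<exists>\<kappa>>0. error_bound_on T (cball zb r) \<kappa>)"

lemma error_bound_on_subset: "error_bound_on T S \<kappa> \<Longrightarrow> S' \<subseteq> S \<Longrightarrow> error_bound_on T S' \<kappa>"
  by (auto simp: error_bound_on_def)

lemma upper_lipschitz_dist_iff_infdist:
  assumes "inv_op T 0 \<noteq> {}"
  shows "upper_lipschitz_dist T \<longleftrightarrow> (\<exists>r>0. \<exists>\<kappa>>0. \<forall>w \<in> cball 0 r. \<forall>z \<in> inv_op T w.
           infdist z (inv_op T 0) \<le> \<kappa> * norm w)"
  by (simp add: upper_lipschitz_dist_def dist_set_nonempty[OF assms])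

lemma upper_lipschitz_dist_imp_incl:
  assumes "inv_op T 0 \<noteq> {}" and "upper_lipschitz_dist T"
  shows "upper_lipschitz_incl T"
proof -
  obtain r \<kappa> where "r > 0" "\<kappa> > 0"
    and bound: "\<forall>w \<in> cball 0 r. \<forall>z \<in> inv_op T w. infdist z (inv_op T 0) \<le> \<kappa> * norm w"
    using assms upper_lipschitz_dist_iff_infdist by blast
  then have "\<forall>w \<in> cball 0 r.
      inv_op T w \<subseteq> {x + y | x y. x \<in> inv_op T 0 \<and> y \<in> cball 0 (2 * \<kappa> * norm w)}"
    using inv_op_subset_plus_cball[OF assms(1)] by simp
  moreover have "2 * \<kappa> > 0" using \<open>\<kappa> > 0\<close> by simp
  ultimately show ?thesis unfolding upper_lipschitz_incl_def using \<open>r > 0\<close>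
    by (intro exI[of _ r] exI[of _ "2 * \<kappa>"] conjI) assumption+
qed

lemma upper_lipschitz_incl_imp_dist:
  assumes "inv_op T 0 \<noteq> {}" and "upper_lipschitz_incl T"
  shows "upper_lipschitz_dist T"
proof -
  obtain r \<kappa> where "r > 0" "\<kappa> > 0" and incl: "\<forall>w \<in> cball 0 r.
      inv_op T w \<subseteq> {x + y | x y. x \<in> inv_op T 0 \<and> y \<in> cball 0 (\<kappa> * norm w)}"
    using assms(2) unfolding upper_lipschitz_incl_def by blast
  have "\<forall>w \<in> cball 0 r. \<forall>z \<in> inv_op T w. infdist z (inv_op T 0) \<le> \<kappa> * norm w"
    using incl by (intro ballI infdist_le_of_mem_plus_cball) blast
  then show ?thesis
    using \<open>r > 0\<close> \<open>\<kappa> > 0\<close> upper_lipschitz_dist_iff_infdist[OF assms(1)] by blast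
qed

lemma upper_lipschitz_dist_imp_error_bound_on_sublevels:
  assumes "inv_op T 0 \<noteq> {}" and "upper_lipschitz_dist T"
  shows "error_bound_on_sublevels T"
  unfolding error_bound_on_sublevels_def
proof (intro allI impI)
  fix r :: real
  obtain r\<^sub>0 \<kappa>\<^sub>0 where "r\<^sub>0 > 0" "\<kappa>\<^sub>0 > 0" and bound: "\<forall>w \<in> cball 0 r\<^sub>0.
      \<forall>z \<in> inv_op T w. infdist z (inv_op T 0) \<le> \<kappa>\<^sub>0 * norm w"
    using assms upper_lipschitz_dist_iff_infdist by blast
  have "infdist z (inv_op T 0) \<le> \<kappa>\<^sub>0 * norm w" if "norm w \<le> r\<^sub>0" "w \<in> T z" for w z
    using bound that by (simp add: inv_op_def)
  note sublevel_bound = infdist_le_on_sublevel_set[OF \<open>r\<^sub>0 > 0\<close> this]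
  have "error_bound_on T {z. dist_set z (inv_op T 0) \<le> ereal r} (max \<kappa>\<^sub>0 (r / r\<^sub>0))"
    unfolding error_bound_on_def
    using dist_set_le_mult_dist_set_zeroI[OF assms(1) _ sublevel_bound] \<open>\<kappa>\<^sub>0 > 0\<close>
      dist_set_nonempty[OF assms(1)] by auto
  moreover have "max \<kappa>\<^sub>0 (r / r\<^sub>0) > 0" using \<open>\<kappa>\<^sub>0 > 0\<close> by simp
  ultimately show "\<exists>\<kappa>>0. error_bound_on T {z. dist_set z (inv_op T 0) \<le> ereal r} \<kappa>" by blast
qed

lemma error_bound_on_sublevels_imp_bounded_sets:
  assumes "inv_op T 0 \<noteq> {}" and "error_bound_on_sublevels T"
  shows "error_bound_on_bounded_sets T"
  unfolding error_bound_on_bounded_sets_def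
proof (intro allI impI)
  fix r :: real assume "r > 0"
  obtain x where "x \<in> inv_op T 0" using assms(1) by blast
  have "r + norm x > 0" using \<open>r > 0\<close> by (simp add: add_pos_nonneg)
  then obtain \<kappa> where "\<kappa> > 0"
    and "error_bound_on T {z. dist_set z (inv_op T 0) \<le> ereal (r + norm x)} \<kappa>"
    using assms(2) unfolding error_bound_on_sublevels_def by blast
  then show "\<exists>\<kappa>>0. error_bound_on T (cball 0 r) \<kappa>"
    using error_bound_on_subset cball_zero_subset_sublevel[OF \<open>x \<in> inv_op T 0\<close>] by blast
qed

lemma error_bound_on_bounded_sets_imp_local:
  assumes "inv_op T 0 \<noteq> {}" and "error_bound_on_bounded_sets T"
  shows "local_error_bound T"
proof -
  obtain x where "x \<in> inv_op T 0" using assms(1) by blast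
  have "norm x + 1 > 0" by (simp add: add_nonneg_pos)
  then obtain \<kappa> where "\<kappa> > 0" and "error_bound_on T (cball 0 (norm x + 1)) \<kappa>"
    using assms(2) unfolding error_bound_on_bounded_sets_def by blast
  then have "error_bound_on T (cball x 1) \<kappa>"
    using error_bound_on_subset cball_subset_cball_zero by blast
  then show ?thesis
    unfolding local_error_bound_def using \<open>x \<in> inv_op T 0\<close> \<open>\<kappa> > 0\<close> zero_less_one by blast
qed

theorem lemma1:
  fixes T :: "'a::euclidean_space \<Rightarrow> 'a set"
  assumes "maximal_monotone T"
    and "inv_op T 0 \<noteq> {}"
  defines "\<Omega> \<equiv> inv_op T 0"
  defines "c1 \<equiv> (\<exists>r>0. \<exists>\<kappa>>0. \<forall>w \<in> cball 0 r. \<forall>z \<in> inv_op T w.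
                    dist_set z \<Omega> \<le> ereal (\<kappa> * norm w))"
    and "c2 \<equiv> (\<exists>r>0. \<exists>\<kappa>>0. \<forall>w \<in> cball 0 r.
                    inv_op T w \<subseteq> {x + y | x y. x \<in> inv_op T 0 \<and> y \<in> cball 0 (\<kappa> * norm w)})"
    and "c3 \<equiv> (\<forall>r>0. \<exists>\<kappa>>0. \<forall>z. dist_set z \<Omega> \<le> ereal r \<longrightarrow>
                    dist_set z \<Omega> \<le> ereal \<kappa> * dist_set 0 (T z))"
    and "c4 \<equiv> (\<forall>r>0. \<exists>\<kappa>>0. \<forall>z. norm z \<le> r \<longrightarrow>
                    dist_set z \<Omega> \<le> ereal \<kappa> * dist_set 0 (T z))"
    and "c5 \<equiv> (\<exists>zb \<in> \<Omega>. \<exists>r>0. \<exists>\<kappa>>0. \<forall>z \<in> cball zb r.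
                    dist_set z \<Omega> \<le> ereal \<kappa> * dist_set 0 (T z))"
  shows "(c1 \<longleftrightarrow> c2) \<and> (c2 \<longrightarrow> c3) \<and> (c3 \<longrightarrow> c4) \<and> (c4 \<longrightarrow> c5)"
proof -
  have "c1 = upper_lipschitz_dist T" "c2 = upper_lipschitz_incl T"
    and "c3 = error_bound_on_sublevels T" "c4 = error_bound_on_bounded_sets T"
    and "c5 = local_error_bound T"
    by (simp_all add: c1_def c2_def c3_def c4_def c5_def \<Omega>_def upper_lipschitz_dist_def
        upper_lipschitz_incl_def error_bound_on_sublevels_def error_bound_on_bounded_sets_def
        local_error_bound_def error_bound_on_def Ball_def)
  then show ?thesis
    using upper_lipschitz_dist_imp_incl[OF assms(2)] upper_lipschitz_incl_imp_dist[OF assms(2)]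
      upper_lipschitz_dist_imp_error_bound_on_sublevels[OF assms(2)]
      error_bound_on_sublevels_imp_bounded_sets[OF assms(2)]
      error_bound_on_bounded_sets_imp_local[OF assms(2)]
    by blast
qed

end
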